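(* Let $M$ be a matroid with at least two bases and of rank at most $2$. Then $M$ has the Borsuk property.
   Context: All matroids are finite. For a matroid $M$, $\mathcal{B}(M)$ denotes its set of bases, and the distance between two bases $B,B'$ is $|B\triangle B'|$ (symmetric difference); $\operatorname{diam}$ denotes the diameter with respect to this distance. The Borsuk number $f(M)$ is the minimum number of parts in a partition of $\mathcal{B}(M)$ in which every part has diameter strictly smaller than $\operatorname{diam}(\mathcal{B}(M))$; if $M$ has exactly one basis, $f(M):=+\infty$. If $M$ has $n$ elements and $c$ connected components, $M$ has the Borsuk property if $f(M)\le n-c+1$. *)

theory Defs
  imports Main "HOL-Library.Disjoint_Sets" "HOL-Library.Extended_Nat"
begin

definition matroid :: "'a set \<Rightarrow> 'a set set \<Rightarrow> bool" where
  "matroid E Bs \<longleftrightarrow> finite E \<and> Bs \<noteq> {} \<and> (\<forall>B\<in>Bs. B \<subseteq> E) \<and>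
     (\<forall>B1\<in>Bs. \<forall>B2\<in>Bs. \<forall>x\<in>B1 - B2. \<exists>y\<in>B2 - B1. insert y (B1 - {x}) \<in> Bs)"

definition indep :: "'a set set \<Rightarrow> 'a set \<Rightarrow> bool" where
  "indep Bs I \<longleftrightarrow> (\<exists>B\<in>Bs. I \<subseteq> B)"

definition circuit :: "'a set \<Rightarrow> 'a set set \<Rightarrow> 'a set \<Rightarrow> bool" where
  "circuit E Bs C \<longleftrightarrow> C \<subseteq> E \<and> \<not> indep Bs C \<and> (\<forall>D. D \<subset> C \<longrightarrow> indep Bs D)"

text \<open>Rank: the common cardinality of the bases.\<close>
definition rank :: "'a set set \<Rightarrow> nat" where
  "rank Bs = card (SOME B. B \<in> Bs)"

definition conn_rel :: "'a set \<Rightarrow> 'a set set \<Rightarrow> ('a \<times> 'a) set" where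
  "conn_rel E Bs = {(x, y). x \<in> E \<and> y \<in> E \<and> (x = y \<or> (\<exists>C. circuit E Bs C \<and> x \<in> C \<and> y \<in> C))}"

definition num_components :: "'a set \<Rightarrow> 'a set set \<Rightarrow> nat" where
  "num_components E Bs = card (E // conn_rel E Bs)"

definition basis_dist :: "'a set \<Rightarrow> 'a set \<Rightarrow> nat" where
  "basis_dist A B = card ((A - B) \<union> (B - A))"

definition diam :: "'a set set \<Rightarrow> nat" where
  "diam S = Max {basis_dist A B | A B. A \<in> S \<and> B \<in> S}"

definition borsuk_number :: "'a set set \<Rightarrow> enat" where
  "borsuk_number Bs = (if card Bs = 1 then \<infinity> else
     enat (LEAST k. \<exists>P. partition_on Bs P \<and> card P = k \<and> (\<forall>S\<in>P. diam S < diam Bs)))"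

definition borsuk_property :: "'a set \<Rightarrow> 'a set set \<Rightarrow> bool" where
  "borsuk_property E Bs \<longleftrightarrow>
     borsuk_number Bs \<le> enat (card E - num_components E Bs + 1)"

end

theory Submission
  imports Defs
begin

text \<open>
  If \<open>A\<close> is a connected component of a matroid on \<open>n\<close> elements with \<open>c\<close> components,
  then \<open>n - c + 1 \<ge> |A|\<close>, so it suffices to split the bases into at most \<open>|A|\<close> parts
  of smaller diameter for a suitable component \<open>A\<close>. If two bases are disjoint, the
  diameter is \<open>2r\<close>, and grouping the bases according to an element they share with a set
  \<open>T\<close> meeting every basis gives \<open>|T|\<close> parts of diameter at most \<open>2(r - 1)\<close>; otherwise
  one counts the bases and uses the partition into singletons.

  In rank one, \<open>A\<close> is the set of non-loops. In rank two, parallelism is an equivalence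
  on the non-loops. With three pairwise non-parallel elements, any two non-loops lie on a
  circuit of size two or three, so the non-loops again form one component, and bases that
  pairwise meet are sides of that triangle. Otherwise there are exactly two parallel
  classes, each of them a component, the larger one \<open>A\<close> meets every basis, and if no two
  bases are disjoint the smaller class is a single point \<open>b\<close>, so all bases have the
  form \<open>{x, b}\<close> with \<open>x \<in> A\<close>.
\<close>

lemma two_le_cardE:
  assumes "2 \<le> card S"
  obtains x y where "x \<in> S" "y \<in> S" "x \<noteq> y"
proof -
  obtain x S' where "S = insert x S'" "x \<notin> S'" "1 \<le> card S'"
    using assms card_le_Suc_iff[of 1 S] by auto
  then show ?thesis
    using that by (metis card.empty ex_in_conv insertCI not_one_le_zero)
qed

lemma partition_on_fibers: "partition_on A ((\<lambda>y. {x \<in> A. f x = y}) ` f ` A)"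
  by (rule partition_onI) (auto simp: disjnt_def)

section \<open>Bases\<close>

lemma matroid_finite_bases: "matroid E Bs \<Longrightarrow> finite Bs"
  unfolding matroid_def by (meson Pow_iff finite_Pow_iff finite_subset subsetI)

lemma matroid_finite_base: "matroid E Bs \<Longrightarrow> B \<in> Bs \<Longrightarrow> finite B"
  unfolding matroid_def by (meson finite_subset)

lemma matroid_exchangeE:
  assumes "matroid E Bs" "B1 \<in> Bs" "B2 \<in> Bs" "x \<in> B1 - B2"
  obtains y where "y \<in> B2 - B1" "insert y (B1 - {x}) \<in> Bs"
  using assms unfolding matroid_def by meson

lemma bases_card_eq:
  assumes m: "matroid E Bs"
  shows "B1 \<in> Bs \<Longrightarrow> B2 \<in> Bs \<Longrightarrow> card B1 = card B2"
proof (induction "card (B1 - B2)" arbitrary: B1 rule: less_induct)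
  case less
  show ?case
  proof (cases "B1 - B2 = {}")
    case True
    have "B2 - B1 = {}"
    proof (rule ccontr)
      assume "B2 - B1 \<noteq> {}"
      then obtain x where "x \<in> B2 - B1" by blast
      then obtain y where "y \<in> B1 - B2"
        by (rule matroid_exchangeE[OF m less.prems(2,1)])
      with True show False by blast
    qed
    with True have "B1 = B2" by blast
    then show ?thesis by simp
  next
    case False
    then obtain x where x: "x \<in> B1 - B2" by blast
    then obtain y where y: "y \<in> B2 - B1" and B: "insert y (B1 - {x}) \<in> Bs"
      by (rule matroid_exchangeE[OF m less.prems])
    have "insert y (B1 - {x}) - B2 = (B1 - B2) - {x}" using x y by auto
    also have "card \<dots> < card (B1 - B2)"
      using x matroid_finite_base[OF m less.prems(1)] by (intro card_Diff1_less) auto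
    finally have "card (insert y (B1 - {x})) = card B2"
      using less.hyps B less.prems(2) by blast
    moreover have "card (insert y (B1 - {x})) = card B1"
      using x y matroid_finite_base[OF m less.prems(1)]
      by (simp add: card_Diff_singleton) (metis Suc_pred card_gt_0_iff empty_iff)
    ultimately show ?thesis by simp
  qed
qed

lemma card_base_eq_rank: "matroid E Bs \<Longrightarrow> B \<in> Bs \<Longrightarrow> card B = rank Bs"
  unfolding rank_def using bases_card_eq someI by metis

section \<open>Diameters and the Borsuk number\<close>

lemma basis_dist_le_diam:
  assumes "finite S" "A \<in> S" "B \<in> S"
  shows "basis_dist A B \<le> diam S"
  unfolding diam_def using assms by (intro Max_ge) (auto intro: finite_image_set2)

lemma diam_le:
  assumes "finite S" "S \<noteq> {}" "\<And>A B. A \<in> S \<Longrightarrow> B \<in> S \<Longrightarrow> basis_dist A B \<le> k"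
  shows "diam S \<le> k"
proof -
  have "{basis_dist A B |A B. A \<in> S \<and> B \<in> S} \<noteq> {}"
    using assms(2) by blast
  then show ?thesis
    unfolding diam_def using assms(1,3) by (subst Max_le_iff) (auto intro: finite_image_set2)
qed

lemma basis_dist_eq_card_Diff:
  assumes "finite A" "finite B" "card A = card B"
  shows "basis_dist A B = 2 * card (A - B)"
proof -
  have "card (A - B) = card (B - A)"
    using assms by (metis Int_commute card_Diff_subset_Int finite_Int)
  then show ?thesis
    unfolding basis_dist_def using assms by (subst card_Un_disjoint) auto
qed

lemma partition_borsuk_number_le:
  assumes "card Bs \<noteq> 1" "partition_on Bs P" "\<forall>S\<in>P. diam S < diam Bs"
  shows "borsuk_number Bs \<le> card P"
proof -
  have "(LEAST k. \<exists>P. partition_on Bs P \<and> card P = k \<and> (\<forall>S\<in>P. diam S < diam Bs)) \<le> card P"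
    using assms(2,3) by (intro Least_le) blast
  then show ?thesis
    using assms(1) by (simp add: borsuk_number_def)
qed

lemma borsuk_number_le_card_bases:
  assumes m: "matroid E Bs" and two: "2 \<le> card Bs"
  shows "borsuk_number Bs \<le> card Bs"
proof -
  obtain B1 B2 where B12: "B1 \<in> Bs" "B2 \<in> Bs" "B1 \<noteq> B2"
    using two by (rule two_le_cardE)
  have "basis_dist B1 B2 \<noteq> 0"
    using B12 matroid_finite_base[OF m] unfolding basis_dist_def by auto
  then have "0 < diam Bs"
    using basis_dist_le_diam[OF matroid_finite_bases[OF m] B12(1,2)] by linarith
  moreover have "diam {B} \<le> 0" for B :: "'a set"
    by (rule diam_le) (auto simp: basis_dist_def)
  ultimately have "\<forall>S\<in>(\<lambda>B. {B}) ` Bs. diam S < diam Bs"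
    by fastforce
  then have "borsuk_number Bs \<le> card ((\<lambda>B. {B}) ` Bs)"
    using two partition_on_singletons by (intro partition_borsuk_number_le) auto
  then show ?thesis
    by (simp add: card_image)
qed

lemma diam_ge_if_disjoint_bases:
  assumes m: "matroid E Bs" and "B1 \<in> Bs" "B2 \<in> Bs" "B1 \<inter> B2 = {}"
  shows "2 * rank Bs \<le> diam Bs"
proof -
  have "2 * rank Bs = basis_dist B1 B2"
    using assms matroid_finite_base[OF m] card_base_eq_rank[OF m]
    by (simp add: basis_dist_eq_card_Diff Diff_triv)
  also have "\<dots> \<le> diam Bs"
    using assms matroid_finite_bases by (intro basis_dist_le_diam)
  finally show ?thesis .
qed

lemma diam_bases_through_le:
  assumes m: "matroid E Bs" and "S \<subseteq> Bs" "S \<noteq> {}" "\<And>B. B \<in> S \<Longrightarrow> t \<in> B"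
  shows "diam S \<le> 2 * (rank Bs - 1)"
proof (rule diam_le)
  show "finite S"
    using assms(2) matroid_finite_bases[OF m] by (rule finite_subset)
  fix A B assume AB: "A \<in> S" "B \<in> S"
  then have fin: "finite A" "finite B" and card: "card A = rank Bs" "card B = rank Bs"
    using assms(2) matroid_finite_base[OF m] card_base_eq_rank[OF m] by auto
  have "card (A - B) \<le> card (A - {t})"
    using AB assms(4) fin by (intro card_mono) auto
  then show "basis_dist A B \<le> 2 * (rank Bs - 1)"
    using AB assms(4) fin card by (simp add: basis_dist_eq_card_Diff)
qed (fact assms(3))

lemma borsuk_number_le_card_transversal:
  assumes m: "matroid E Bs" and B12: "B1 \<in> Bs" "B2 \<in> Bs" "B1 \<inter> B2 = {}"
    and T: "finite T" "\<And>B. B \<in> Bs \<Longrightarrow> B \<inter> T \<noteq> {}"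
  shows "borsuk_number Bs \<le> card T"
proof -
  define g where "g B = (SOME t. t \<in> B \<inter> T)" for B
  have g: "g B \<in> B \<inter> T" if "B \<in> Bs" for B
    using T(2)[OF that] unfolding g_def ex_in_conv[symmetric] by (rule someI_ex)
  define P where "P = (\<lambda>t. {B \<in> Bs. g B = t}) ` g ` Bs"
  have "card P \<le> card (g ` Bs)"
    unfolding P_def by (rule card_image_le) (simp add: matroid_finite_bases[OF m])
  also have "\<dots> \<le> card T"
    using g T(1) by (intro card_mono) auto
  finally have card_P: "card P \<le> card T" .
  have "B1 \<noteq> {}"
    using T(2)[OF B12(1)] by blast
  then have "0 < rank Bs"
    using B12(1) m by (metis card_base_eq_rank card_gt_0_iff matroid_finite_base)
  then have "diam S < diam Bs" if "S \<in> P" for S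
    using that diam_ge_if_disjoint_bases[OF m B12] diam_bases_through_le[OF m, of S]
    unfolding P_def using g by fastforce
  moreover have "card Bs \<noteq> 1"
    using B12 \<open>B1 \<noteq> {}\<close> by (auto simp: card_1_singleton_iff)
  ultimately have "borsuk_number Bs \<le> card P"
    using partition_on_fibers unfolding P_def by (intro partition_borsuk_number_le) auto
  with card_P show ?thesis
    by (meson enat_ord_simps(1) order_trans)
qed

section \<open>Circuits and connected components\<close>

lemma circuitI:
  assumes "C \<subseteq> E" "\<not> indep Bs C" "\<And>c. c \<in> C \<Longrightarrow> indep Bs (C - {c})"
  shows "circuit E Bs C"
  unfolding circuit_def
proof (intro conjI allI impI assms(1,2))
  fix D assume "D \<subset> C"
  then obtain c where "c \<in> C" "c \<notin> D"
    by (meson psubset_imp_ex_mem DiffE)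
  then have "D \<subseteq> C - {c}"
    using \<open>D \<subset> C\<close> by blast
  with assms(3)[OF \<open>c \<in> C\<close>] show "indep Bs D"
    unfolding indep_def by blast
qed

lemma circuit_eq_if_dependent: "circuit E Bs C \<Longrightarrow> D \<subseteq> C \<Longrightarrow> \<not> indep Bs D \<Longrightarrow> D = C"
  unfolding circuit_def by blast

lemma circuit_loop: "circuit E Bs C \<Longrightarrow> l \<in> C \<Longrightarrow> l \<notin> \<Union>Bs \<Longrightarrow> C = {l}"
  using circuit_eq_if_dependent[of E Bs C "{l}"] unfolding indep_def by blast

lemma circuit_pair:
  assumes "x \<in> \<Union>Bs" "y \<in> \<Union>Bs" "\<Union>Bs \<subseteq> E" "\<not> indep Bs {x, y}"
  shows "circuit E Bs {x, y}"
proof (rule circuitI)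
  fix c assume "c \<in> {x, y}"
  then have "{x, y} - {c} \<subseteq> {x} \<or> {x, y} - {c} \<subseteq> {y}" by blast
  then show "indep Bs ({x, y} - {c})"
    using assms(1,2) unfolding indep_def by blast
qed (use assms in auto)

lemma conn_relI_circuit: "circuit E Bs C \<Longrightarrow> x \<in> C \<Longrightarrow> y \<in> C \<Longrightarrow> (x, y) \<in> conn_rel E Bs"
  unfolding conn_rel_def circuit_def by blast

lemma conn_rel_nonloop:
  assumes "(x, y) \<in> conn_rel E Bs" "x \<in> \<Union>Bs"
  shows "y \<in> \<Union>Bs"
proof -
  obtain C where "x = y \<or> circuit E Bs C \<and> x \<in> C \<and> y \<in> C"
    using assms(1) unfolding conn_rel_def by blast
  then show ?thesis
    using assms(2) circuit_loop[of E Bs C y] by blast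
qed

text \<open>An equivalence class of \<^const>\<open>conn_rel\<close>, phrased so as not to rely on its transitivity.\<close>

definition conn_component :: "'a set \<Rightarrow> 'a set set \<Rightarrow> 'a set \<Rightarrow> bool" where
  "conn_component E Bs A \<longleftrightarrow> A \<noteq> {} \<and> (\<forall>x\<in>A. conn_rel E Bs `` {x} = A)"

lemma conn_componentI:
  assumes "a \<in> A"
    and "\<And>x y. x \<in> A \<Longrightarrow> y \<in> A \<Longrightarrow> (x, y) \<in> conn_rel E Bs"
    and "\<And>x y. x \<in> A \<Longrightarrow> (x, y) \<in> conn_rel E Bs \<Longrightarrow> y \<in> A"
  shows "conn_component E Bs A"
  unfolding conn_component_def using assms by blast

lemma conn_component_subset: "conn_component E Bs A \<Longrightarrow> A \<subseteq> E"
  unfolding conn_component_def conn_rel_def by blast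

lemma conn_component_nonloops:
  assumes "x \<in> \<Union>Bs" "\<Union>Bs \<subseteq> E"
    and "\<And>x y. x \<in> \<Union>Bs \<Longrightarrow> y \<in> \<Union>Bs \<Longrightarrow> x \<noteq> y \<Longrightarrow> \<exists>C. circuit E Bs C \<and> x \<in> C \<and> y \<in> C"
  shows "conn_component E Bs (\<Union>Bs)"
proof (rule conn_componentI[OF assms(1)])
  fix x y assume "x \<in> \<Union>Bs" "y \<in> \<Union>Bs"
  then show "(x, y) \<in> conn_rel E Bs"
    using assms(2) assms(3)[of x y] unfolding conn_rel_def by (cases "x = y") auto
next
  fix x y assume "x \<in> \<Union>Bs" "(x, y) \<in> conn_rel E Bs"
  then show "y \<in> \<Union>Bs" by (rule conn_rel_nonloop[rotated])
qed

lemma num_components_le: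
  assumes "finite E" "conn_component E Bs A"
  shows "num_components E Bs \<le> card (E - A) + 1"
proof -
  let ?cls = "\<lambda>x. conn_rel E Bs `` {x}"
  have "E // conn_rel E Bs = ?cls ` A \<union> ?cls ` (E - A)"
    using conn_component_subset[OF assms(2)] by (auto simp: quotient_def)
  also have "?cls ` A = {A}"
    using assms(2) unfolding conn_component_def by auto
  finally have "num_components E Bs \<le> card {A} + card (?cls ` (E - A))"
    unfolding num_components_def by (metis card_Un_le)
  also have "\<dots> \<le> 1 + card (E - A)"
    using card_image_le[of "E - A" ?cls] assms(1) by simp
  finally show ?thesis by simp
qed

lemma borsuk_property_if_conn_component:
  assumes m: "matroid E Bs" and A: "conn_component E Bs A"
    and "borsuk_number Bs \<le> card A"
  shows "borsuk_property E Bs"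
proof -
  have fin: "finite E" using m unfolding matroid_def by simp
  have AE: "A \<subseteq> E" by (rule conn_component_subset[OF A])
  have "num_components E Bs \<le> card E - card A + 1"
    using num_components_le[OF fin A] card_Diff_subset[OF finite_subset[OF AE fin] AE] by simp
  moreover have "card A \<le> card E"
    using AE fin by (rule card_mono[rotated])
  ultimately have "card A \<le> card E - num_components E Bs + 1"
    by linarith
  with assms(3) show ?thesis
    unfolding borsuk_property_def by (meson enat_ord_simps(1) order_trans)
qed

section \<open>Matroids of rank one\<close>

lemma borsuk_property_rank1:
  assumes m: "matroid E Bs" and one: "\<And>B. B \<in> Bs \<Longrightarrow> card B = 1" and two: "2 \<le> card Bs"
  shows "borsuk_property E Bs"
proof -
  obtain B1 B2 where B12: "B1 \<in> Bs" "B2 \<in> Bs" "B1 \<noteq> B2"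
    using two by (rule two_le_cardE)
  obtain x1 x2 where "B1 = {x1}" "B2 = {x2}"
    using one B12 by (metis card_1_singletonE)
  then have "B1 \<inter> B2 = {}" "x1 \<in> \<Union>Bs"
    using B12 by auto
  have nonloops: "\<Union>Bs \<subseteq> E"
    using m unfolding matroid_def by blast
  have "conn_component E Bs (\<Union>Bs)"
  proof (rule conn_component_nonloops[OF \<open>x1 \<in> \<Union>Bs\<close> nonloops])
    fix x y assume xy: "x \<in> \<Union>Bs" "y \<in> \<Union>Bs" "x \<noteq> y"
    have "\<not> indep Bs {x, y}"
    proof
      assume "indep Bs {x, y}"
      then obtain B where B: "B \<in> Bs" "{x, y} \<subseteq> B"
        unfolding indep_def by blast
      then have "card {x, y} \<le> card B"
        using matroid_finite_base[OF m] by (intro card_mono) auto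
      with xy(3) one[OF B(1)] show False
        by simp
    qed
    then show "\<exists>C. circuit E Bs C \<and> x \<in> C \<and> y \<in> C"
      using circuit_pair[OF xy(1,2) nonloops] by blast
  qed
  moreover have "borsuk_number Bs \<le> card (\<Union>Bs)"
  proof (rule borsuk_number_le_card_transversal[OF m B12(1,2) \<open>B1 \<inter> B2 = {}\<close>])
    show "finite (\<Union>Bs)"
      using m finite_subset[OF nonloops] unfolding matroid_def by blast
    show "B \<inter> \<Union>Bs \<noteq> {}" if "B \<in> Bs" for B
      using that one[OF that] by (auto simp: card_1_singleton_iff)
  qed
  ultimately show ?thesis
    using m by (rule borsuk_property_if_conn_component[rotated])
qed

section \<open>Matroids of rank two\<close>

locale rank2_matroid =
  fixes E :: "'a set" and Bs :: "'a set set"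
  assumes matroid: "matroid E Bs" and card_base: "B \<in> Bs \<Longrightarrow> card B = 2"
begin

lemma nonloops_subset: "\<Union>Bs \<subseteq> E"
  using matroid unfolding matroid_def by blast

lemma finite_nonloops: "finite (\<Union>Bs)"
  using matroid finite_subset[OF nonloops_subset] unfolding matroid_def by blast

lemma baseE:
  assumes "B \<in> Bs"
  obtains x y where "x \<noteq> y" "B = {x, y}"
  using card_base[OF assms] by (meson card_2_iff)

lemma base_neq: "{x, y} \<in> Bs \<Longrightarrow> x \<noteq> y"
  using card_base by fastforce

lemma indep_doubleton_iff:
  assumes "x \<noteq> y"
  shows "indep Bs {x, y} \<longleftrightarrow> {x, y} \<in> Bs"
proof
  assume "indep Bs {x, y}"
  then obtain B where B: "B \<in> Bs" "{x, y} \<subseteq> B"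
    unfolding indep_def by blast
  have "{x, y} = B"
    using B assms card_base[OF B(1)] matroid_finite_base[OF matroid B(1)]
    by (intro card_subset_eq) auto
  with B(1) show "{x, y} \<in> Bs" by simp
qed (auto simp: indep_def)

text \<open>On non-loops this is the usual parallelism: \<open>x = y\<close> or \<open>{x, y}\<close> is a circuit.\<close>

definition parallel :: "'a \<Rightarrow> 'a \<Rightarrow> bool" where
  "parallel x y \<longleftrightarrow> x \<in> \<Union>Bs \<and> y \<in> \<Union>Bs \<and> {x, y} \<notin> Bs"

lemma parallel_refl: "x \<in> \<Union>Bs \<Longrightarrow> parallel x x"
  unfolding parallel_def using card_base by fastforce

lemma parallel_sym: "parallel x y \<Longrightarrow> parallel y x"
  unfolding parallel_def by (simp add: insert_commute)

lemma parallel_trans: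
  assumes xy: "parallel x y" and yz: "parallel y z"
  shows "parallel x z"
proof (rule ccontr)
  assume "\<not> parallel x z"
  then have xz: "{x, z} \<in> Bs"
    using xy yz unfolding parallel_def by blast
  obtain B where B: "B \<in> Bs" "y \<in> B"
    using xy unfolding parallel_def by blast
  then obtain w where w: "w \<noteq> y" "B = {y, w}"
    by (elim baseE) (metis empty_iff insertE insert_commute)
  have "w \<noteq> x"
    using xy B(1) w(2) unfolding parallel_def by (metis insert_commute)
  moreover have "w \<noteq> z"
    using yz B(1) w(2) unfolding parallel_def by blast
  ultimately have "w \<in> B - {x, z}"
    using w by simp
  \<comment> \<open>exchanging \<open>w\<close> against the base \<open>{x, z}\<close> yields a base \<open>{u, y}\<close> with \<open>u \<in> {x, z}\<close>\<close>
  then obtain u where u: "u \<in> {x, z} - B" "insert u (B - {w}) \<in> Bs"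
    by (rule matroid_exchangeE[OF matroid B(1) xz])
  moreover have "B - {w} = {y}"
    using w by auto
  ultimately have "{u, y} \<in> Bs"
    by simp
  moreover have "u = x \<or> u = z"
    using u(1) by blast
  ultimately show False
    using xy yz unfolding parallel_def by (metis insert_commute)
qed

lemma parallel_common: "parallel x a \<Longrightarrow> parallel y a \<Longrightarrow> parallel x y"
  using parallel_trans parallel_sym by blast

lemma base_iff_not_parallel:
  assumes "x \<in> \<Union>Bs" "y \<in> \<Union>Bs"
  shows "{x, y} \<in> Bs \<longleftrightarrow> \<not> parallel x y"
  using assms unfolding parallel_def by blast

lemma circuit_parallel: "parallel x y \<Longrightarrow> x \<noteq> y \<Longrightarrow> circuit E Bs {x, y}"
  using circuit_pair[OF _ _ nonloops_subset] indep_doubleton_iff unfolding parallel_def by blast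

lemma circuit_triangle:
  assumes "{x, y} \<in> Bs" "{y, z} \<in> Bs" "{x, z} \<in> Bs"
  shows "circuit E Bs {x, y, z}"
proof (rule circuitI)
  show "{x, y, z} \<subseteq> E"
    using assms nonloops_subset by blast
  show "\<not> indep Bs {x, y, z}"
  proof
    assume "indep Bs {x, y, z}"
    then obtain B where B: "B \<in> Bs" "{x, y, z} \<subseteq> B"
      unfolding indep_def by blast
    then have "card {x, y, z} \<le> card B"
      using matroid_finite_base[OF matroid] by (intro card_mono) auto
    then show False
      using card_base[OF B(1)] assms base_neq by simp
  qed
  fix c assume "c \<in> {x, y, z}"
  then have "{x, y, z} - {c} \<subseteq> {y, z} \<or> {x, y, z} - {c} \<subseteq> {x, z} \<or> {x, y, z} - {c} \<subseteq> {x, y}"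
    by blast
  then show "indep Bs ({x, y, z} - {c})"
    using assms unfolding indep_def by blast
qed

lemma conn_component_if_triangle:
  assumes pq: "{p, q} \<in> Bs" and qr: "{q, r} \<in> Bs" and pr: "{p, r} \<in> Bs"
  shows "conn_component E Bs (\<Union>Bs)"
proof (rule conn_component_nonloops[OF _ nonloops_subset])
  show "p \<in> \<Union>Bs"
    using pq by blast
  fix x y assume xy: "x \<in> \<Union>Bs" "y \<in> \<Union>Bs" "x \<noteq> y"
  show "\<exists>C. circuit E Bs C \<and> x \<in> C \<and> y \<in> C"
  proof (cases "parallel x y")
    case True
    then show ?thesis
      using circuit_parallel xy(3) by blast
  next
    case False
    have at_most_one: "\<not> (parallel u s \<and> parallel u t)" if "{s, t} \<in> Bs" for u s t
      using that parallel_trans parallel_sym unfolding parallel_def by blast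
    obtain z where z: "z \<in> {p, q, r}" "\<not> parallel x z" "\<not> parallel y z"
      using at_most_one[OF pq] at_most_one[OF qr] at_most_one[OF pr] by blast
    have "z \<in> \<Union>Bs"
      using z(1) pq qr by blast
    then have "{x, y} \<in> Bs" "{y, z} \<in> Bs" "{x, z} \<in> Bs"
      using xy False z base_iff_not_parallel by blast+
    then show ?thesis
      using circuit_triangle by blast
  qed
qed

lemma bases_eq_triangle_if_intersecting:
  assumes pq: "{p, q} \<in> Bs" and qr: "{q, r} \<in> Bs" and pr: "{p, r} \<in> Bs"
    and intersecting: "\<not> (\<exists>B1\<in>Bs. \<exists>B2\<in>Bs. B1 \<inter> B2 = {})"
  shows "Bs = {{p, q}, {q, r}, {p, r}}"
proof
  have distinct: "p \<noteq> q" "q \<noteq> r" "p \<noteq> r"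
    using pq qr pr base_neq by blast+
  show "Bs \<subseteq> {{p, q}, {q, r}, {p, r}}"
  proof
    fix B assume "B \<in> Bs"
    then obtain u v where uv: "u \<noteq> v" "B = {u, v}"
      by (rule baseE)
    have "B \<inter> {p, q} \<noteq> {}" "B \<inter> {q, r} \<noteq> {}" "B \<inter> {p, r} \<noteq> {}"
      using intersecting \<open>B \<in> Bs\<close> pq qr pr by blast+
    then show "B \<in> {{p, q}, {q, r}, {p, r}}"
      using uv distinct by auto
  qed
qed (use pq qr pr in blast)

lemma borsuk_number_le_if_triangle:
  assumes pq: "{p, q} \<in> Bs" and qr: "{q, r} \<in> Bs" and pr: "{p, r} \<in> Bs"
  shows "borsuk_number Bs \<le> card (\<Union>Bs)"
proof (cases "\<exists>B1\<in>Bs. \<exists>B2\<in>Bs. B1 \<inter> B2 = {}")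
  case True
  then obtain B1 B2 where "B1 \<in> Bs" "B2 \<in> Bs" "B1 \<inter> B2 = {}"
    by blast
  then show ?thesis
    by (rule borsuk_number_le_card_transversal[OF matroid _ _ _ finite_nonloops])
      (auto elim: baseE)
next
  case False
  have "p \<noteq> q" "q \<noteq> r" "p \<noteq> r"
    using pq qr pr base_neq by blast+
  then have "card Bs = card {p, q, r}"
    unfolding bases_eq_triangle_if_intersecting[OF pq qr pr False]
    by (simp add: doubleton_eq_iff)
  also have "\<dots> \<le> card (\<Union>Bs)"
    using pq qr finite_nonloops by (intro card_mono) auto
  finally have "card Bs \<le> card (\<Union>Bs)" .
  moreover have "2 \<le> card Bs"
    using \<open>card Bs = card {p, q, r}\<close> \<open>p \<noteq> q\<close> \<open>q \<noteq> r\<close> \<open>p \<noteq> r\<close> by simp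
  ultimately show ?thesis
    using borsuk_number_le_card_bases[OF matroid] by (meson enat_ord_simps(1) order_trans)
qed

lemma finite_parallel_class: "finite {x. parallel x a}"
  using finite_nonloops by (rule finite_subset[rotated]) (auto simp: parallel_def)

lemma circuit_eq_if_parallel:
  assumes "circuit E Bs C" "x \<in> C" "y \<in> C" "x \<noteq> y" "parallel x y"
  shows "C = {x, y}"
proof -
  have "\<not> indep Bs {x, y}"
    using assms(4,5) indep_doubleton_iff unfolding parallel_def by blast
  with assms(1-3) show ?thesis
    using circuit_eq_if_dependent by (metis empty_subsetI insert_subset)
qed

lemma parallel_to_base_end:
  assumes no_triangle: "\<nexists>p q r. {p, q} \<in> Bs \<and> {q, r} \<in> Bs \<and> {p, r} \<in> Bs"
    and ab: "{a, b} \<in> Bs" and x: "x \<in> \<Union>Bs"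
  shows "parallel x a \<or> parallel x b"
proof (rule ccontr)
  assume "\<not> (parallel x a \<or> parallel x b)"
  moreover have "a \<in> \<Union>Bs" "b \<in> \<Union>Bs"
    using ab by blast+
  ultimately have "{x, a} \<in> Bs" "{x, b} \<in> Bs"
    using x base_iff_not_parallel by blast+
  with ab no_triangle show False
    by (metis insert_commute)
qed

lemma circuit_within_parallel_class:
  assumes no_triangle: "\<nexists>p q r. {p, q} \<in> Bs \<and> {q, r} \<in> Bs \<and> {p, r} \<in> Bs"
    and ab: "{a, b} \<in> Bs" and C: "circuit E Bs C" "x \<in> C" "z \<in> C" and xa: "parallel x a"
  shows "parallel z a"
proof (rule ccontr)
  assume za: "\<not> parallel z a"
  then have "x \<noteq> z"
    using xa by blast
  have "x \<in> \<Union>Bs"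
    using xa unfolding parallel_def by simp
  then have z: "z \<in> \<Union>Bs"
    by (rule conn_rel_nonloop[OF conn_relI_circuit[OF C]])
  have "\<not> parallel x z"
    using xa za by (metis parallel_sym parallel_trans)
  then have "{x, z} \<in> Bs"
    using \<open>x \<in> \<Union>Bs\<close> z base_iff_not_parallel by blast
  then have "indep Bs {x, z}"
    unfolding indep_def by blast
  then have "C \<noteq> {x, z}"
    using C(1) unfolding circuit_def by blast
  then obtain w where w: "w \<in> C" "w \<noteq> x" "w \<noteq> z"
    using C by blast
  have "w \<in> \<Union>Bs"
    using circuit_loop[OF C(1) w(1)] C(2) w(2) by blast
  then have "parallel w a \<or> parallel w b"
    using parallel_to_base_end[OF no_triangle ab] by blast
  moreover have "parallel z b"
    using parallel_to_base_end[OF no_triangle ab z] za by blast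
  ultimately have "parallel w x \<or> parallel w z"
    using xa by (metis parallel_common)
  then show False
    using circuit_eq_if_parallel[OF C(1) w(1)] C(2,3) w \<open>x \<noteq> z\<close> by blast
qed

lemma conn_component_parallel_class:
  assumes no_triangle: "\<nexists>p q r. {p, q} \<in> Bs \<and> {q, r} \<in> Bs \<and> {p, r} \<in> Bs"
    and ab: "{a, b} \<in> Bs"
  shows "conn_component E Bs {x. parallel x a}"
proof (rule conn_componentI)
  show "a \<in> {x. parallel x a}"
    using ab parallel_refl by blast
next
  fix x y assume "x \<in> {x. parallel x a}" "y \<in> {x. parallel x a}"
  then have "parallel x y"
    by (auto intro: parallel_common)
  show "(x, y) \<in> conn_rel E Bs"
  proof (cases "x = y")
    case True
    then show ?thesis
      using \<open>parallel x y\<close> nonloops_subset unfolding conn_rel_def parallel_def by blast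
  next
    case False
    show ?thesis
      using circuit_parallel[OF \<open>parallel x y\<close> False] by (rule conn_relI_circuit) simp_all
  qed
next
  fix x z assume x: "x \<in> {x. parallel x a}" and xz: "(x, z) \<in> conn_rel E Bs"
  then obtain C where "x = z \<or> circuit E Bs C \<and> x \<in> C \<and> z \<in> C"
    unfolding conn_rel_def by blast
  then show "z \<in> {x. parallel x a}"
    using x circuit_within_parallel_class[OF no_triangle ab, of C x z] by auto
qed

lemma base_meets_parallel_class:
  assumes no_triangle: "\<nexists>p q r. {p, q} \<in> Bs \<and> {q, r} \<in> Bs \<and> {p, r} \<in> Bs"
    and ab: "{a, b} \<in> Bs" and B: "B \<in> Bs"
  shows "B \<inter> {x. parallel x a} \<noteq> {}"
proof -
  obtain u v where uv: "u \<noteq> v" "B = {u, v}"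
    using B by (rule baseE)
  then have "\<not> parallel u v" "u \<in> \<Union>Bs" "v \<in> \<Union>Bs"
    using B base_iff_not_parallel by blast+
  then have "parallel u a \<or> parallel v a"
    using parallel_to_base_end[OF no_triangle ab] by (metis parallel_common)
  then show ?thesis
    using uv by blast
qed

lemma parallel_class_singleton_if_intersecting:
  assumes no_triangle: "\<nexists>p q r. {p, q} \<in> Bs \<and> {q, r} \<in> Bs \<and> {p, r} \<in> Bs"
    and ab: "{a, b} \<in> Bs"
    and larger: "card {x. parallel x b} \<le> card {x. parallel x a}"
    and intersecting: "\<not> (\<exists>B1\<in>Bs. \<exists>B2\<in>Bs. B1 \<inter> B2 = {})"
  shows "{x. parallel x b} = {b}"
proof -
  have "b \<in> \<Union>Bs"
    using ab by blast
  have ab_not_parallel: "\<not> parallel a b"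
    using ab base_iff_not_parallel by blast
  have "v = b" if vb: "parallel v b" for v
  proof (rule ccontr)
    assume "v \<noteq> b"
    have "{b, v} \<subseteq> {x. parallel x b}"
      using vb parallel_refl \<open>b \<in> \<Union>Bs\<close> by blast
    then have "card {b, v} \<le> card {x. parallel x b}"
      by (rule card_mono[OF finite_parallel_class])
    then have "2 \<le> card {x. parallel x a}"
      using \<open>v \<noteq> b\<close> larger by simp
    then obtain a' where a'a: "parallel a' a" and "a' \<noteq> a"
      by (elim two_le_cardE) blast
    have "\<not> parallel a' v"
    proof
      assume "parallel a' v"
      then have "parallel a b"
        using parallel_trans[OF parallel_trans[OF parallel_sym[OF a'a]] vb] by blast
      with ab_not_parallel show False ..
    qed
    moreover have "a' \<in> \<Union>Bs" "v \<in> \<Union>Bs"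
      using a'a vb unfolding parallel_def by simp_all
    ultimately have "{a', v} \<in> Bs"
      using base_iff_not_parallel by blast
    moreover have "a' \<noteq> b" "v \<noteq> a"
      using a'a vb ab_not_parallel parallel_sym by metis+
    then have "{a', v} \<inter> {a, b} = {}"
      using \<open>a' \<noteq> a\<close> \<open>v \<noteq> b\<close> by auto
    ultimately show False
      using intersecting ab by blast
  qed
  then show ?thesis
    using parallel_refl \<open>b \<in> \<Union>Bs\<close> by blast
qed

lemma borsuk_number_le_parallel_class:
  assumes no_triangle: "\<nexists>p q r. {p, q} \<in> Bs \<and> {q, r} \<in> Bs \<and> {p, r} \<in> Bs"
    and ab: "{a, b} \<in> Bs"
    and larger: "card {x. parallel x b} \<le> card {x. parallel x a}"
    and two: "2 \<le> card Bs"
  shows "borsuk_number Bs \<le> card {x. parallel x a}"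
proof (cases "\<exists>B1\<in>Bs. \<exists>B2\<in>Bs. B1 \<inter> B2 = {}")
  case True
  then obtain B1 B2 where "B1 \<in> Bs" "B2 \<in> Bs" "B1 \<inter> B2 = {}"
    by blast
  then show ?thesis
    using base_meets_parallel_class[OF no_triangle ab]
    by (rule borsuk_number_le_card_transversal[OF matroid _ _ _ finite_parallel_class])
next
  case False
  let ?A = "{x. parallel x a}"
  have "Bs \<subseteq> (\<lambda>x. {x, b}) ` ?A"
  proof
    fix B assume B: "B \<in> Bs"
    then obtain u where u: "u \<in> B" "parallel u a"
      using base_meets_parallel_class[OF no_triangle ab] by blast
    then obtain v where v: "B = {u, v}" "u \<noteq> v"
      using B by (elim baseE) (metis empty_iff insertE insert_commute)
    then have "\<not> parallel u v" "v \<in> \<Union>Bs"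
      using B base_iff_not_parallel by blast+
    then have "parallel v b"
      using parallel_to_base_end[OF no_triangle ab] u(2) by (metis parallel_common)
    then have "v = b"
      using parallel_class_singleton_if_intersecting[OF no_triangle ab larger False] by blast
    then show "B \<in> (\<lambda>x. {x, b}) ` ?A"
      using u(2) v(1) by blast
  qed
  then have "card Bs \<le> card ((\<lambda>x. {x, b}) ` ?A)"
    using finite_parallel_class by (intro card_mono) auto
  also have "\<dots> \<le> card ?A"
    using finite_parallel_class by (rule card_image_le)
  finally show ?thesis
    using borsuk_number_le_card_bases[OF matroid two] by (meson enat_ord_simps(1) order_trans)
qed

lemma borsuk_property:
  assumes two: "2 \<le> card Bs"
  shows "borsuk_property E Bs"
proof (cases "\<exists>p q r. {p, q} \<in> Bs \<and> {q, r} \<in> Bs \<and> {p, r} \<in> Bs")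
  case True
  then obtain p q r where triangle: "{p, q} \<in> Bs" "{q, r} \<in> Bs" "{p, r} \<in> Bs"
    by blast
  show ?thesis
    by (rule borsuk_property_if_conn_component[OF matroid conn_component_if_triangle[OF triangle]
          borsuk_number_le_if_triangle[OF triangle]])
next
  case no_triangle: False
  obtain B where "B \<in> Bs"
    using two by (elim two_le_cardE)
  then obtain a0 b0 where base: "{a0, b0} \<in> Bs"
    by (metis baseE)
  obtain a b where ab: "{a, b} \<in> Bs" and "card {x. parallel x b} \<le> card {x. parallel x a}"
  proof (cases "card {x. parallel x b0} \<le> card {x. parallel x a0}")
    case False
    with base show ?thesis
      using that[of b0 a0] by (simp add: insert_commute)
  qed (use base that in blast)
  then show ?thesis
    using borsuk_property_if_conn_component[OF matroid conn_component_parallel_class[OF no_triangle ab]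
        borsuk_number_le_parallel_class[OF no_triangle ab _ two]]
    by blast
qed

end

theorem theorem2:
  fixes E :: "'a set" and Bs :: "'a set set"
  assumes "matroid E Bs"
    and "card Bs \<ge> 2"
    and "rank Bs \<le> 2"
  shows "borsuk_property E Bs"
proof -
  obtain B1 B2 where B12: "B1 \<in> Bs" "B2 \<in> Bs" "B1 \<noteq> B2"
    using assms(2) by (rule two_le_cardE)
  then obtain B where "B \<in> Bs" "B \<noteq> {}"
    by blast
  then have "rank Bs \<noteq> 0"
    using card_base_eq_rank[OF assms(1)] matroid_finite_base[OF assms(1)] by fastforce
  with assms(3) consider "rank Bs = 1" | "rank Bs = 2"
    by linarith
  then show ?thesis
  proof cases
    case 1
    then show ?thesis
      using borsuk_property_rank1[OF assms(1) _ assms(2)] card_base_eq_rank[OF assms(1)] by simp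
  next
    case 2
    then interpret rank2_matroid E Bs
      using assms(1) card_base_eq_rank[OF assms(1)] by unfold_locales simp_all
    show ?thesis
      using assms(2) by (rule borsuk_property)
  qed
qed

end
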